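(* There is a universal constant $c>0$ such that for all sufficiently large $T$ and every (possibly randomized) forecasting algorithm $\mathcal{A}$ the following holds. Run $\mathcal{A}$ for $T$ steps on outcomes $x_1,\ldots,x_T$ that are independent $\mathrm{Bernoulli}(1/2)$ bits, and let $S_t = \sum_{t'=1}^t (x_{t'} - p_{t'})$ for $t \in [T]$. Then at least one of the following holds: $\Pr[\max_{t \in [T]} |S_t| \ge c\,T^{1/3}] \ge c$, or $\mathbb{E}[\mathsf{smCE}(x,p)] \ge c\,T^{1/3}$, where probability and expectation are over the random bits and the randomness of $\mathcal{A}$.
   Context: A forecasting algorithm chooses each prediction $p_t \in [0,1]$ as a (possibly randomized) function of $x_1,\ldots,x_{t-1}, p_1,\ldots,p_{t-1}$, before $x_t$ is revealed. $\mathsf{smCE}(x,p) = \sup_{f \in \mathcal{F}} \sum_{t=1}^T f(p_t)(x_t - p_t)$, where $\mathcal{F}$ is the family of $1$-Lipschitz functions from $[0,1]$ to $[-1,1]$. *)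

theory Defs
  imports "HOL-Probability.Probability"
begin

text \<open>Outcome sequences of length T are bit lists bs (bs ! (t-1) is x_t, t = 1..T).
  A randomized forecasting algorithm is a function A of a random seed w (drawn from a
  probability measure M on a standard space, here the reals) and the list of past
  outcomes [x_1,...,x_(t-1)]; its prediction is p_t = A w [x_1,...,x_(t-1)].\<close>

definition outcome :: "bool list \<Rightarrow> nat \<Rightarrow> real" where
  "outcome bs t = (if bs ! (t - 1) then 1 else 0)"

definition forecast :: "(real \<Rightarrow> bool list \<Rightarrow> real) \<Rightarrow> real \<Rightarrow> bool list \<Rightarrow> nat \<Rightarrow> real" where
  "forecast A w bs t = A w (take (t - 1) bs)"

definition partial_bias ::
  "(real \<Rightarrow> bool list \<Rightarrow> real) \<Rightarrow> real \<Rightarrow> bool list \<Rightarrow> nat \<Rightarrow> real" where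
  "partial_bias A w bs t = (\<Sum>s=1..t. outcome bs s - forecast A w bs s)"

definition Lip1 :: "(real \<Rightarrow> real) set" where
  "Lip1 = {f. (\<forall>u\<in>{0..1}. \<forall>v\<in>{0..1}. \<bar>f u - f v\<bar> \<le> \<bar>u - v\<bar>) \<and>
             (\<forall>u\<in>{0..1}. \<bar>f u\<bar> \<le> 1)}"

definition smCE :: "nat \<Rightarrow> (nat \<Rightarrow> real) \<Rightarrow> (nat \<Rightarrow> real) \<Rightarrow> real" where
  "smCE T x p = (SUP f\<in>Lip1. \<Sum>t=1..T. f (p t) * (x t - p t))"

end

(* Fix the seed w of the algorithm, so that the forecaster is deterministic, and average over
   the 2^T outcome strings.  Stop the walk S_t at the first time |S_t| >= B, B = T^(1/3)/8.
   With q_t = p_t - 1/2, the increment S_t^2 - S_(t-1)^2 is a martingale difference plus the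
   drift 1/4 + q_t^2 - 2 S_(t-1) q_t, which before stopping is at least 3/16 - 16 B^2 q_t^2,
   while the stopped square never exceeds (B+1)^2.  Hence strings on which the walk stays in
   (-B, B) force sum_t q_t^2 to be of order T/B^2, and testing smCE against f p = 1/2 - p
   bounds sum_t q_t^2 by smCE on average.  Averaging over w: if the walk leaves (-B, B) with
   probability below 1/8, the expected smCE is of order T/B^2, which is at least B. *)

theory Submission
  imports Defs
begin

lemma outcome_take: "1 \<le> s \<Longrightarrow> s \<le> k \<Longrightarrow> outcome (take k bs) s = outcome bs s"
  unfolding outcome_def by simp

lemma forecast_take: "s \<le> Suc k \<Longrightarrow> forecast A w (take k bs) s = forecast A w bs s"
  unfolding forecast_def by (simp add: min_absorb1)

lemma partial_bias_take: "s \<le> k \<Longrightarrow> partial_bias A w (take k bs) s = partial_bias A w bs s"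
  unfolding partial_bias_def by (intro sum.cong refl) (simp add: outcome_take forecast_take)

lemma partial_bias_0 [simp]: "partial_bias A w bs 0 = 0"
  unfolding partial_bias_def by simp

lemma partial_bias_Suc:
  "partial_bias A w bs (Suc n) = partial_bias A w bs n + (outcome bs (Suc n) - forecast A w bs (Suc n))"
  unfolding partial_bias_def by simp

lemma outcome_cases: "outcome bs t = 0 \<or> outcome bs t = 1"
  unfolding outcome_def by simp

lemma outcome_in_unit: "outcome bs t \<in> {0..1}"
  unfolding outcome_def by simp

lemma forecast_in_unit: "\<forall>h. 0 \<le> A w h \<and> A w h \<le> 1 \<Longrightarrow> forecast A w bs t \<in> {0..1}"
  unfolding forecast_def by simp

lemma abs_partial_bias_Suc_le:
  assumes "\<forall>h. 0 \<le> A w h \<and> A w h \<le> 1"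
  shows "\<bar>partial_bias A w bs (Suc n)\<bar> \<le> \<bar>partial_bias A w bs n\<bar> + 1"
  using forecast_in_unit[of A w bs "Suc n", OF assms] outcome_cases[of bs "Suc n"]
  unfolding partial_bias_Suc by auto

lemma card_lists_length_eq_bool: "card {bs :: bool list. length bs = T} = 2 ^ T"
  using card_lists_length_eq[of "UNIV :: bool set" T] by simp

lemma sum_predictable_times_centred_outcome:
  fixes F :: "bool list \<Rightarrow> real"
  assumes t: "t \<in> {1..T}" and predictable: "\<And>bs. F (take (t - 1) bs) = F bs"
  shows "(\<Sum>bs | length bs = T. F bs * (outcome bs t - 1/2)) = 0"
proof -
  define flip where "flip bs = bs[t - 1 := \<not> bs ! (t - 1)]" for bs :: "bool list"
  let ?L = "{bs :: bool list. length bs = T}"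
  let ?h = "\<lambda>bs. F bs * (outcome bs t - 1/2)"
  have idx: "t - 1 < T" using t by auto
  have flip_flip: "flip (flip bs) = bs" if "bs \<in> ?L" for bs
    using that idx unfolding flip_def by auto
  have flip_L: "flip bs \<in> ?L" if "bs \<in> ?L" for bs
    using that unfolding flip_def by simp
  have h_flip: "?h (flip bs) = - ?h bs" if "bs \<in> ?L" for bs
  proof -
    have "F (flip bs) = F bs"
      by (metis predictable flip_def order_refl take_update_cancel)
    moreover have "outcome (flip bs) t = 1 - outcome bs t"
      using that idx unfolding flip_def outcome_def by simp
    ultimately have "?h (flip bs) = F bs * ((1 - outcome bs t) - 1/2)" by simp
    then show ?thesis by (simp add: algebra_simps)
  qed
  have "(\<Sum>bs\<in>?L. - ?h bs) = (\<Sum>bs\<in>?L. ?h bs)"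
    by (rule sum.reindex_bij_witness[of _ flip flip]) (use flip_flip flip_L h_flip in auto)
  then show ?thesis by (simp add: sum_negf)
qed

(* unstopped B S t = 1 iff t <= tau, for the stopping time tau = min {s. |S s| >= B}. *)
definition unstopped :: "real \<Rightarrow> (nat \<Rightarrow> real) \<Rightarrow> nat \<Rightarrow> real" where
  "unstopped B S t = (if \<forall>s<t. \<bar>S s\<bar> < B then 1 else 0)"

lemma sum_unstopped_square_increments_le:
  fixes S :: "nat \<Rightarrow> real"
  assumes S0: "S 0 = 0" and step: "\<And>n. \<bar>S (Suc n)\<bar> \<le> \<bar>S n\<bar> + 1"
  shows "(\<Sum>t=1..n. unstopped B S t * (S t ^ 2 - S (t - 1) ^ 2)) \<le> (B + 1) ^ 2"
proof -
  let ?G = "\<lambda>n. \<Sum>t=1..n. unstopped B S t * (S t ^ 2 - S (t - 1) ^ 2)"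
  have "?G n \<le> (B + 1) ^ 2 \<and> ((\<forall>s\<le>n. \<bar>S s\<bar> < B) \<longrightarrow> ?G n = S n ^ 2)"
  proof (induction n)
    case 0
    then show ?case by (simp add: S0)
  next
    case (Suc n)
    show ?case
    proof (cases "\<forall>s\<le>n. \<bar>S s\<bar> < B")
      case True
      then have "unstopped B S (Suc n) = 1"
        unfolding unstopped_def by (simp add: less_Suc_eq_le)
      moreover have "?G n = S n ^ 2"
        using Suc.IH True by blast
      moreover have "S (Suc n) ^ 2 \<le> (B + 1) ^ 2"
      proof -
        have "\<bar>S (Suc n)\<bar> \<le> \<bar>B + 1\<bar>"
          using True step[of n] by fastforce
        then show ?thesis by (simp add: abs_le_square_iff)
      qed
      ultimately show ?thesis by simp
    next
      case False
      then have "unstopped B S (Suc n) = 0"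
        unfolding unstopped_def by (auto simp: less_Suc_eq_le)
      then show ?thesis using Suc.IH False by auto
    qed
  qed
  then show ?thesis by blast
qed

lemma square_increment_split:
  fixes s x q :: real
  assumes "x = 0 \<or> x = 1"
  shows "(s + (x - 1/2) - q) ^ 2 - s ^ 2 = 1/4 + q ^ 2 - 2 * s * q + 2 * (s - q) * (x - 1/2)"
  using assms by (auto simp: power2_eq_square algebra_simps)

lemma drift_lower_bound:
  fixes s q B :: real
  assumes "\<bar>s\<bar> \<le> B"
  shows "3/16 - 16 * B ^ 2 * q ^ 2 \<le> 1/4 + q ^ 2 - 2 * s * q"
proof -
  have "s * q \<le> \<bar>s\<bar> * \<bar>q\<bar>"
    by (metis abs_ge_self abs_mult)
  also have "\<dots> \<le> B * \<bar>q\<bar>"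
    using assms by (intro mult_right_mono) auto
  finally have "s * q \<le> B * \<bar>q\<bar>" .
  have "0 \<le> (4 * B * \<bar>q\<bar> - 1/4) ^ 2" by simp
  also have "\<dots> = 16 * B ^ 2 * q ^ 2 - 2 * B * \<bar>q\<bar> + 1/16"
    by (simp add: power2_eq_square algebra_simps)
  finally show ?thesis
    using \<open>s * q \<le> B * \<bar>q\<bar>\<close> zero_le_power2[of q] by linarith
qed

lemma unstopped_drift_lower_bound:
  fixes S :: "nat \<Rightarrow> real"
  assumes S0: "S 0 = 0" and B: "0 < B" and t: "t \<in> {1..T}"
  shows "3/16 - 3/16 * of_bool (\<exists>s\<in>{1..T}. B \<le> \<bar>S s\<bar>) - 16 * B ^ 2 * q ^ 2
    \<le> unstopped B S t * (1/4 + q ^ 2 - 2 * S (t - 1) * q)"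
proof (cases "\<forall>s<t. \<bar>S s\<bar> < B")
  case True
  moreover have "t - 1 < t" using t by simp
  ultimately have "\<bar>S (t - 1)\<bar> \<le> B" by (meson less_imp_le)
  then have "3/16 - 16 * B ^ 2 * q ^ 2 \<le> 1/4 + q ^ 2 - 2 * S (t - 1) * q"
    by (rule drift_lower_bound)
  moreover have "unstopped B S t = 1" using True unfolding unstopped_def by simp
  ultimately show ?thesis by simp
next
  case False
  then obtain s where s: "s < t" "B \<le> \<bar>S s\<bar>" by auto
  with S0 B have "s \<noteq> 0" by (intro notI) simp
  with s t have "\<exists>s\<in>{1..T}. B \<le> \<bar>S s\<bar>" by auto
  moreover have "unstopped B S t = 0" using False unfolding unstopped_def by argo
  ultimately show ?thesis by simp
qed

lemma sum_unstopped_square_increments_eq_drift: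
  "(\<Sum>bs | length bs = T. \<Sum>t=1..T. unstopped B (partial_bias A w bs) t
      * (partial_bias A w bs t ^ 2 - partial_bias A w bs (t - 1) ^ 2))
   = (\<Sum>bs | length bs = T. \<Sum>t=1..T. unstopped B (partial_bias A w bs) t
      * (1/4 + (forecast A w bs t - 1/2) ^ 2 - 2 * partial_bias A w bs (t - 1) * (forecast A w bs t - 1/2)))"
proof -
  let ?L = "{bs :: bool list. length bs = T}"
  let ?S = "partial_bias A w"
  let ?q = "\<lambda>bs t. forecast A w bs t - 1/2"
  let ?g = "\<lambda>bs. unstopped B (?S bs)"
  define drift where "drift bs t = 1/4 + ?q bs t ^ 2 - 2 * ?S bs (t - 1) * ?q bs t" for bs t
  define F where "F t bs = ?g bs t * 2 * (?S bs (t - 1) - ?q bs t)" for t bs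
  have increment: "?g bs t * (?S bs t ^ 2 - ?S bs (t - 1) ^ 2)
      = ?g bs t * drift bs t + F t bs * (outcome bs t - 1/2)" if t: "t \<in> {1..T}" for bs t
  proof -
    obtain m where m: "t = Suc m" using t by (cases t) auto
    have step: "?S bs t = ?S bs (t - 1) + (outcome bs t - 1/2) - ?q bs t"
      unfolding m partial_bias_Suc by simp
    have "?S bs t ^ 2 - ?S bs (t - 1) ^ 2
        = drift bs t + 2 * (?S bs (t - 1) - ?q bs t) * (outcome bs t - 1/2)"
      unfolding step drift_def by (rule square_increment_split[OF outcome_cases])
    then show ?thesis unfolding F_def by (simp only:) (simp add: algebra_simps)
  qed
  have martingale: "(\<Sum>bs\<in>?L. F t bs * (outcome bs t - 1/2)) = 0" if "t \<in> {1..T}" for t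
    using that by (intro sum_predictable_times_centred_outcome)
      (simp_all add: F_def unstopped_def partial_bias_take forecast_take)
  have "(\<Sum>bs\<in>?L. \<Sum>t=1..T. ?g bs t * (?S bs t ^ 2 - ?S bs (t - 1) ^ 2))
      = (\<Sum>bs\<in>?L. \<Sum>t=1..T. ?g bs t * drift bs t + F t bs * (outcome bs t - 1/2))"
    by (intro sum.cong refl increment)
  also have "\<dots> = (\<Sum>bs\<in>?L. \<Sum>t=1..T. ?g bs t * drift bs t)
      + (\<Sum>t=1..T. \<Sum>bs\<in>?L. F t bs * (outcome bs t - 1/2))"
    by (simp add: sum.distrib) (rule sum.swap)
  finally show ?thesis using martingale by (simp add: drift_def)
qed

lemma sum_exits_or_sq_forecast_deviation:
  assumes A01: "\<forall>h. 0 \<le> A w h \<and> A w h \<le> 1" and B: "0 < B"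
  shows "3/16 * real T * 2 ^ T \<le> 2 ^ T * (B + 1) ^ 2 +
    (\<Sum>bs | length bs = T. 3/16 * real T * of_bool (\<exists>t\<in>{1..T}. B \<le> \<bar>partial_bias A w bs t\<bar>)
       + 16 * B ^ 2 * (\<Sum>t=1..T. (forecast A w bs t - 1/2) ^ 2))"
proof -
  let ?L = "{bs :: bool list. length bs = T}"
  let ?S = "partial_bias A w"
  let ?q = "\<lambda>bs t. forecast A w bs t - 1/2"
  let ?g = "\<lambda>bs. unstopped B (?S bs)"
  define exits :: "bool list \<Rightarrow> real" where
    "exits bs = of_bool (\<exists>t\<in>{1..T}. B \<le> \<bar>?S bs t\<bar>)" for bs
  have "(\<Sum>bs\<in>?L. 3/16 * real T - 3/16 * real T * exits bs - 16 * B ^ 2 * (\<Sum>t=1..T. ?q bs t ^ 2))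
      \<le> (\<Sum>bs\<in>?L. \<Sum>t=1..T. ?g bs t * (1/4 + ?q bs t ^ 2 - 2 * ?S bs (t - 1) * ?q bs t))"
  proof (rule sum_mono)
    fix bs
    have "(\<Sum>t=1..T. 3/16 - 3/16 * exits bs - 16 * B ^ 2 * ?q bs t ^ 2)
        \<le> (\<Sum>t=1..T. ?g bs t * (1/4 + ?q bs t ^ 2 - 2 * ?S bs (t - 1) * ?q bs t))"
      unfolding exits_def by (intro sum_mono unstopped_drift_lower_bound B) simp_all
    then show "3/16 * real T - 3/16 * real T * exits bs - 16 * B ^ 2 * (\<Sum>t=1..T. ?q bs t ^ 2)
        \<le> (\<Sum>t=1..T. ?g bs t * (1/4 + ?q bs t ^ 2 - 2 * ?S bs (t - 1) * ?q bs t))"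
      by (simp add: sum_subtractf sum_distrib_left right_diff_distrib)
  qed
  also have "\<dots> = (\<Sum>bs\<in>?L. \<Sum>t=1..T. ?g bs t * (?S bs t ^ 2 - ?S bs (t - 1) ^ 2))"
    by (rule sum_unstopped_square_increments_eq_drift[symmetric])
  also have "\<dots> \<le> (\<Sum>bs\<in>?L. (B + 1) ^ 2)"
    by (intro sum_mono sum_unstopped_square_increments_le)
      (simp_all add: abs_partial_bias_Suc_le[of A w, OF A01])
  finally show ?thesis
    unfolding exits_def by (simp add: sum_subtractf sum.distrib card_lists_length_eq_bool algebra_simps)
qed

lemma Lip1_zero: "(\<lambda>_. 0) \<in> Lip1"
  unfolding Lip1_def by simp

lemma Lip1_half_minus: "(\<lambda>u. 1/2 - u) \<in> Lip1"
  unfolding Lip1_def by auto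

lemma Lip1_term_le:
  assumes "f \<in> Lip1" "p \<in> {0..1}" "x \<in> {0..1}"
  shows "f p * (x - p) \<le> 1"
proof -
  have "\<bar>f p\<bar> \<le> 1" using assms unfolding Lip1_def by auto
  moreover have "\<bar>x - p\<bar> \<le> 1" using assms by auto
  ultimately have "\<bar>f p * (x - p)\<bar> \<le> 1" by (simp add: abs_mult mult_le_one)
  then show ?thesis by simp
qed

lemma Lip1_term_diff_le:
  assumes "f \<in> Lip1" "u \<in> {0..1}" "v \<in> {0..1}" "x \<in> {0..1}"
  shows "f u * (x - u) \<le> f v * (x - v) + 2 * \<bar>u - v\<bar>"
proof -
  have Lip: "\<bar>f u - f v\<bar> \<le> \<bar>u - v\<bar>" and bound: "\<bar>f v\<bar> \<le> 1"
    using assms unfolding Lip1_def by auto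
  have "\<bar>x - u\<bar> \<le> 1" using assms by auto
  have "f u * (x - u) - f v * (x - v) = (f u - f v) * (x - u) + f v * (v - u)"
    by (simp add: algebra_simps)
  also have "\<dots> \<le> \<bar>f u - f v\<bar> * \<bar>x - u\<bar> + \<bar>f v\<bar> * \<bar>v - u\<bar>"
    by (intro add_mono) (metis abs_ge_self abs_mult)+
  also have "\<dots> \<le> \<bar>u - v\<bar> * 1 + 1 * \<bar>u - v\<bar>"
    by (intro add_mono mult_mono) (use Lip bound \<open>\<bar>x - u\<bar> \<le> 1\<close> in \<open>auto simp: abs_minus_commute\<close>)
  finally show ?thesis by simp
qed

lemma sum_Lip1_le:
  assumes "f \<in> Lip1" "\<And>t. t \<in> {1..T} \<Longrightarrow> p t \<in> {0..1}" "\<And>t. t \<in> {1..T} \<Longrightarrow> x t \<in> {0..1}"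
  shows "(\<Sum>t=1..T. f (p t) * (x t - p t)) \<le> real T"
proof -
  have "(\<Sum>t=1..T. f (p t) * (x t - p t)) \<le> (\<Sum>t=1..T. 1)"
    by (intro sum_mono Lip1_term_le assms)
  then show ?thesis by simp
qed

lemma smCE_upper:
  assumes "f \<in> Lip1" "\<And>t. t \<in> {1..T} \<Longrightarrow> p t \<in> {0..1}" "\<And>t. t \<in> {1..T} \<Longrightarrow> x t \<in> {0..1}"
  shows "(\<Sum>t=1..T. f (p t) * (x t - p t)) \<le> smCE T x p"
  unfolding smCE_def
proof (rule cSUP_upper[OF assms(1)])
  show "bdd_above ((\<lambda>f. \<Sum>t=1..T. f (p t) * (x t - p t)) ` Lip1)"
    using sum_Lip1_le[OF _ assms(2,3)] by (intro bdd_aboveI2) auto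
qed

lemma smCE_le:
  assumes "\<And>t. t \<in> {1..T} \<Longrightarrow> p t \<in> {0..1}" "\<And>t. t \<in> {1..T} \<Longrightarrow> x t \<in> {0..1}"
  shows "smCE T x p \<le> real T"
  unfolding smCE_def by (rule cSUP_least) (use Lip1_zero sum_Lip1_le[OF _ assms] in auto)

lemma smCE_nonneg:
  assumes "\<And>t. t \<in> {1..T} \<Longrightarrow> p t \<in> {0..1}" "\<And>t. t \<in> {1..T} \<Longrightarrow> x t \<in> {0..1}"
  shows "0 \<le> smCE T x p"
  using smCE_upper[OF Lip1_zero assms] by simp

lemma smCE_le_smCE_add:
  assumes u: "\<And>t. t \<in> {1..T} \<Longrightarrow> u t \<in> {0..1}" and v: "\<And>t. t \<in> {1..T} \<Longrightarrow> v t \<in> {0..1}"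
    and x: "\<And>t. t \<in> {1..T} \<Longrightarrow> x t \<in> {0..1}"
  shows "smCE T x u \<le> smCE T x v + 2 * (\<Sum>t=1..T. \<bar>u t - v t\<bar>)"
  unfolding smCE_def[of T x u]
proof (rule cSUP_least)
  show "Lip1 \<noteq> {}" using Lip1_zero by auto
  fix f assume f: "f \<in> Lip1"
  have "(\<Sum>t=1..T. f (u t) * (x t - u t)) \<le> (\<Sum>t=1..T. f (v t) * (x t - v t) + 2 * \<bar>u t - v t\<bar>)"
    by (intro sum_mono Lip1_term_diff_le f u v x)
  also have "\<dots> = (\<Sum>t=1..T. f (v t) * (x t - v t)) + 2 * (\<Sum>t=1..T. \<bar>u t - v t\<bar>)"
    by (simp add: sum.distrib sum_distrib_left)
  also have "\<dots> \<le> smCE T x v + 2 * (\<Sum>t=1..T. \<bar>u t - v t\<bar>)"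
    using smCE_upper[OF f v x] by simp
  finally show "(\<Sum>t=1..T. f (u t) * (x t - u t)) \<le> smCE T x v + 2 * (\<Sum>t=1..T. \<bar>u t - v t\<bar>)" .
qed

(* (1/2 - p) (x - p) = (p - 1/2)^2 - (p - 1/2) (x - 1/2), and the last term averages out. *)
lemma sum_sq_forecast_deviation_le_sum_smCE:
  assumes A01: "\<forall>h. 0 \<le> A w h \<and> A w h \<le> 1"
  shows "(\<Sum>bs | length bs = T. \<Sum>t=1..T. (forecast A w bs t - 1/2) ^ 2)
    \<le> (\<Sum>bs | length bs = T. smCE T (outcome bs) (forecast A w bs))"
proof -
  let ?L = "{bs :: bool list. length bs = T}"
  let ?q = "\<lambda>bs t. forecast A w bs t - 1/2"
  have martingale: "(\<Sum>bs\<in>?L. ?q bs t * (outcome bs t - 1/2)) = 0" if "t \<in> {1..T}" for t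
    using that by (intro sum_predictable_times_centred_outcome) (simp_all add: forecast_take)
  have "(\<Sum>bs\<in>?L. \<Sum>t=1..T. ?q bs t ^ 2)
      = (\<Sum>bs\<in>?L. \<Sum>t=1..T. (1/2 - forecast A w bs t) * (outcome bs t - forecast A w bs t)
           + ?q bs t * (outcome bs t - 1/2))"
    by (intro sum.cong refl) (simp add: power2_eq_square algebra_simps)
  also have "\<dots> = (\<Sum>bs\<in>?L. \<Sum>t=1..T. (1/2 - forecast A w bs t) * (outcome bs t - forecast A w bs t))
      + (\<Sum>t=1..T. \<Sum>bs\<in>?L. ?q bs t * (outcome bs t - 1/2))"
    by (simp add: sum.distrib) (rule sum.swap)
  also have "(\<Sum>t=1..T. \<Sum>bs\<in>?L. ?q bs t * (outcome bs t - 1/2)) = 0"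
    using martingale by simp
  also have "(\<Sum>bs\<in>?L. \<Sum>t=1..T. (1/2 - forecast A w bs t) * (outcome bs t - forecast A w bs t))
      \<le> (\<Sum>bs\<in>?L. smCE T (outcome bs) (forecast A w bs))"
    by (intro sum_mono smCE_upper Lip1_half_minus forecast_in_unit[of A w, OF A01] outcome_in_unit)
  finally show ?thesis by simp
qed

lemma clamp_unit_in_unit: "clamp 0 1 (y :: real) \<in> {0..1}"
  using clamp_in_interval[of 0 1 y] by (simp add: cbox_interval)

lemma clamp_unit_cancel: "(y :: real) \<in> {0..1} \<Longrightarrow> clamp 0 1 y = y"
  using clamp_cancel_cbox[of y 0 1] by (simp add: cbox_interval)

lemma abs_clamp_unit_diff_le: "\<bar>clamp 0 1 a - clamp 0 1 b\<bar> \<le> \<bar>a - (b :: real)\<bar>"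
  using dist_clamps_le_dist_args[of 0 1 a b] by (simp add: dist_real_def)

(* Lip1 constrains f only on [0,1], so smCE is well behaved only for forecasts in [0,1];
   clamping extends it to a continuous function of all forecast sequences. *)
lemma continuous_on_smCE_clamp:
  assumes x: "\<And>t. t \<in> {1..T} \<Longrightarrow> x t \<in> {0..1}"
  shows "continuous_on UNIV (\<lambda>p :: nat \<Rightarrow> real. smCE T x (\<lambda>t. clamp 0 1 (p t)))"
  unfolding continuous_on_def
proof (intro ballI)
  fix p :: "nat \<Rightarrow> real"
  let ?\<Phi> = "\<lambda>p :: nat \<Rightarrow> real. smCE T x (\<lambda>t. clamp 0 1 (p t))"
  let ?d = "\<lambda>q :: nat \<Rightarrow> real. 2 * (\<Sum>t=1..T. \<bar>q t - p t\<bar>)"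
  have bound: "norm (?\<Phi> q - ?\<Phi> p) \<le> ?d q" for q
  proof -
    have "?\<Phi> q \<le> ?\<Phi> p + 2 * (\<Sum>t=1..T. \<bar>clamp 0 1 (q t) - clamp 0 1 (p t)\<bar>)"
      by (rule smCE_le_smCE_add) (use clamp_unit_in_unit x in blast)+
    moreover have "?\<Phi> p \<le> ?\<Phi> q + 2 * (\<Sum>t=1..T. \<bar>clamp 0 1 (p t) - clamp 0 1 (q t)\<bar>)"
      by (rule smCE_le_smCE_add) (use clamp_unit_in_unit x in blast)+
    moreover have "(\<Sum>t=1..T. \<bar>clamp 0 1 (q t) - clamp 0 1 (p t)\<bar>) \<le> (\<Sum>t=1..T. \<bar>q t - p t\<bar>)"
      by (intro sum_mono abs_clamp_unit_diff_le)
    moreover have "(\<Sum>t=1..T. \<bar>clamp 0 1 (p t) - clamp 0 1 (q t)\<bar>) \<le> (\<Sum>t=1..T. \<bar>q t - p t\<bar>)"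
      by (intro sum_mono) (metis abs_clamp_unit_diff_le abs_minus_commute)
    ultimately show ?thesis
      unfolding real_norm_def abs_le_iff by linarith
  qed
  have "continuous_on UNIV ?d"
    by (intro continuous_intros continuous_on_product_coordinates)
  then have "(?d \<longlongrightarrow> ?d p) (at p within UNIV)"
    unfolding continuous_on_def by blast
  then have "(?d \<longlongrightarrow> 0) (at p within UNIV)"
    by simp
  then have "((\<lambda>q. ?\<Phi> q - ?\<Phi> p) \<longlongrightarrow> 0) (at p within UNIV)"
    by (rule Lim_null_comparison[OF always_eventually, OF allI, OF bound])
  then show "(?\<Phi> \<longlongrightarrow> ?\<Phi> p) (at p within UNIV)"
    by (simp add: LIM_zero_iff)
qed

lemma borel_measurable_forecast:
  "\<forall>h. (\<lambda>w. A w h) \<in> borel_measurable M \<Longrightarrow> (\<lambda>w. forecast A w bs t) \<in> borel_measurable M"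
  unfolding forecast_def by blast

lemma borel_measurable_partial_bias:
  "\<forall>h. (\<lambda>w. A w h) \<in> borel_measurable M \<Longrightarrow> (\<lambda>w. partial_bias A w bs t) \<in> borel_measurable M"
  unfolding partial_bias_def by (intro borel_measurable_sum borel_measurable_diff
      borel_measurable_const borel_measurable_forecast)

lemma borel_measurable_smCE:
  assumes meas: "\<forall>h. (\<lambda>w. A w h) \<in> borel_measurable M" and A01: "\<forall>w h. 0 \<le> A w h \<and> A w h \<le> 1"
  shows "(\<lambda>w. smCE T (outcome bs) (forecast A w bs)) \<in> borel_measurable M"
proof -
  let ?\<Phi> = "\<lambda>p :: nat \<Rightarrow> real. smCE T (outcome bs) (\<lambda>t. clamp 0 1 (p t))"
  have "(\<lambda>t. clamp 0 1 (forecast A w bs t)) = forecast A w bs" for w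
    using A01 by (intro ext clamp_unit_cancel forecast_in_unit) simp
  then have eq: "smCE T (outcome bs) (forecast A w bs) = ?\<Phi> (forecast A w bs)" for w
    by simp
  have "(\<lambda>w. forecast A w bs) \<in> borel_measurable M"
    by (intro measurable_coordinatewise_then_product borel_measurable_forecast meas)
  moreover have "?\<Phi> \<in> borel_measurable borel"
    by (intro borel_measurable_continuous_onI continuous_on_smCE_clamp outcome_in_unit)
  ultimately show ?thesis
    unfolding eq by (rule measurable_compose)
qed

lemma sum_exits_or_smCE:
  assumes A01: "\<forall>h. 0 \<le> A w h \<and> A w h \<le> 1" and B: "0 < B"
  shows "3/16 * real T * 2 ^ T \<le> 2 ^ T * (B + 1) ^ 2 +
    (\<Sum>bs | length bs = T. 3/16 * real T * of_bool (\<exists>t\<in>{1..T}. B \<le> \<bar>partial_bias A w bs t\<bar>)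
       + 16 * B ^ 2 * smCE T (outcome bs) (forecast A w bs))"
proof -
  have "(\<Sum>bs | length bs = T. 16 * B ^ 2 * (\<Sum>t=1..T. (forecast A w bs t - 1/2) ^ 2))
      \<le> (\<Sum>bs | length bs = T. 16 * B ^ 2 * smCE T (outcome bs) (forecast A w bs))"
    using sum_sq_forecast_deviation_le_sum_smCE[where A = A and w = w and T = T, OF A01]
    by (simp add: sum_distrib_left[symmetric] mult_left_mono)
  then show ?thesis
    using sum_exits_or_sq_forecast_deviation[where A = A and w = w and T = T, OF A01 B]
    unfolding sum.distrib by linarith
qed

lemma integrable_smCE:
  fixes M :: "real measure"
  assumes "finite_measure M" and meas: "\<forall>h. (\<lambda>w. A w h) \<in> borel_measurable M"
    and A01: "\<forall>w h. 0 \<le> A w h \<and> A w h \<le> 1"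
  shows "integrable M (\<lambda>w. smCE T (outcome bs) (forecast A w bs))"
proof -
  interpret finite_measure M by fact
  show ?thesis
  proof (rule integrable_const_bound[where B = "real T"])
    show "AE w in M. norm (smCE T (outcome bs) (forecast A w bs)) \<le> real T"
      using smCE_nonneg smCE_le forecast_in_unit[of A, OF spec[OF A01]] outcome_in_unit
      by (intro AE_I2) (simp add: abs_le_iff)
    show "(\<lambda>w. smCE T (outcome bs) (forecast A w bs)) \<in> borel_measurable M"
      using meas A01 by (rule borel_measurable_smCE)
  qed
qed

lemma exit_prob_or_expected_smCE:
  fixes M :: "real measure"
  assumes "prob_space M" and meas: "\<forall>h. (\<lambda>w. A w h) \<in> borel_measurable M"
    and A01: "\<forall>w h. 0 \<le> A w h \<and> A w h \<le> 1" and B: "0 < B"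
  shows "3/16 * real T \<le> (B + 1) ^ 2
    + 3/16 * real T * ((\<Sum>bs | length bs = T.
        measure M {w \<in> space M. \<exists>t\<in>{1..T}. B \<le> \<bar>partial_bias A w bs t\<bar>}) / 2 ^ T)
    + 16 * B ^ 2 * ((\<Sum>bs | length bs = T. \<integral>w. smCE T (outcome bs) (forecast A w bs) \<partial>M) / 2 ^ T)"
proof -
  interpret prob_space M by fact
  let ?L = "{bs :: bool list. length bs = T}"
  let ?smCE = "\<lambda>bs w. smCE T (outcome bs) (forecast A w bs)"
  define exits where "exits bs = {w \<in> space M. \<exists>t\<in>{1..T}. B \<le> \<bar>partial_bias A w bs t\<bar>}" for bs
  have exits_sets: "exits bs \<in> sets M" for bs
  proof -
    have [measurable]: "(\<lambda>w. partial_bias A w bs t) \<in> borel_measurable M" for t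
      using meas by (rule borel_measurable_partial_bias)
    show ?thesis unfolding exits_def by measurable
  qed
  have integrable: "integrable M (indicator (exits bs) :: real \<Rightarrow> real)" "integrable M (?smCE bs)" for bs
    using exits_sets integrable_smCE[OF finite_measure_axioms meas A01]
    by (simp_all add: integrable_real_indicator emeasure_eq_measure)
  have "3/16 * real T * 2 ^ T - 2 ^ T * (B + 1) ^ 2
      \<le> (\<Sum>bs\<in>?L. 3/16 * real T * indicator (exits bs) w + 16 * B ^ 2 * ?smCE bs w)"
    if "w \<in> space M" for w
    using sum_exits_or_smCE[where A = A and w = w and T = T, OF spec[OF A01] B] that
    by (simp add: exits_def indicator_def)
  then have "3/16 * real T * 2 ^ T - 2 ^ T * (B + 1) ^ 2
      \<le> (\<integral>w. (\<Sum>bs\<in>?L. 3/16 * real T * indicator (exits bs) w + 16 * B ^ 2 * ?smCE bs w) \<partial>M)"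
    using integrable by (intro integral_ge_const AE_I2) auto
  also have "\<dots> = 3/16 * real T * (\<Sum>bs\<in>?L. prob (exits bs))
      + 16 * B ^ 2 * (\<Sum>bs\<in>?L. integral\<^sup>L M (?smCE bs))"
    using integrable exits_sets
    by (simp add: integral_sum integral_add Int_absorb2 sets.sets_into_space sum.distrib sum_distrib_left)
  finally show ?thesis
    unfolding exits_def by (simp add: field_simps)
qed

lemma powr_one_third_cube:
  fixes x :: real
  assumes "0 \<le> x"
  shows "(x powr (1/3)) ^ 3 = x"
proof (cases "x = 0")
  case False
  with assms have "0 < x" by simp
  then show ?thesis by (simp add: powr_realpow[symmetric] powr_powr)
qed simp

lemma exit_prob_or_smCE_arith:
  fixes T B P E :: real
  assumes T: "512 \<le> T" and B: "0 < B" "512 * B ^ 3 = T"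
    and tradeoff: "3/16 * T \<le> (B + 1) ^ 2 + 3/16 * T * P + 16 * B ^ 2 * E"
  shows "1/8 \<le> P \<or> B \<le> E"
proof (rule ccontr)
  assume "\<not> ?thesis"
  then have P: "P < 1/8" and E: "E < B" by auto
  have B1: "1 \<le> B"
    by (rule power_le_imp_le_base[where n = 2]) (use T B in simp_all)
  have "(B + 1) ^ 2 \<le> (2 * B) ^ 2" using B1 by (intro power_mono) auto
  also have "\<dots> \<le> 4 * B ^ 3" using B1 power_increasing[of 2 3 B] by simp
  finally have "(B + 1) ^ 2 \<le> T / 128" using B by simp
  moreover have "3/16 * T * P \<le> 3/16 * T * (1/8)" using P T by simp
  moreover have "16 * B ^ 2 * E \<le> 16 * B ^ 2 * B" using E by (intro mult_left_mono) auto
  moreover have "16 * B ^ 2 * B = T / 32" using B by (simp add: power3_eq_cube power2_eq_square)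
  ultimately show False using tradeoff T by linarith
qed

theorem lemma12:
  shows "\<exists>c>0. \<exists>T0::nat. \<forall>T\<ge>T0. \<forall>(M::real measure) (A::real \<Rightarrow> bool list \<Rightarrow> real).
    prob_space M \<longrightarrow>
    (\<forall>h. (\<lambda>w. A w h) \<in> borel_measurable M) \<longrightarrow>
    (\<forall>w h. 0 \<le> A w h \<and> A w h \<le> 1) \<longrightarrow>
    ((\<Sum>bs\<in>{bs. length bs = T}.
        measure M {w\<in>space M. \<exists>t\<in>{1..T}. \<bar>partial_bias A w bs t\<bar> \<ge> c * real T powr (1/3)})
        / 2 ^ T \<ge> c
     \<or>
     (\<Sum>bs\<in>{bs. length bs = T}.
        (\<integral>w. smCE T (outcome bs) (forecast A w bs) \<partial>M)) / 2 ^ T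
        \<ge> c * real T powr (1/3))"
proof (intro exI[of _ "1/8 :: real"] conjI exI[of _ "512 :: nat"] allI impI)
  fix T :: nat and M :: "real measure" and A :: "real \<Rightarrow> bool list \<Rightarrow> real"
  assume T: "512 \<le> T" and M: "prob_space M" and meas: "\<forall>h. (\<lambda>w. A w h) \<in> borel_measurable M"
    and A01: "\<forall>w h. 0 \<le> A w h \<and> A w h \<le> 1"
  define B where "B = 1/8 * real T powr (1/3)"
  have B: "0 < B" "512 * B ^ 3 = real T"
    using T unfolding B_def by (simp_all add: power_divide powr_one_third_cube)
  show "1/8 \<le> (\<Sum>bs\<in>{bs. length bs = T}.
        measure M {w\<in>space M. \<exists>t\<in>{1..T}. 1/8 * real T powr (1/3) \<le> \<bar>partial_bias A w bs t\<bar>}) / 2 ^ T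
     \<or> 1/8 * real T powr (1/3) \<le> (\<Sum>bs\<in>{bs. length bs = T}.
        (\<integral>w. smCE T (outcome bs) (forecast A w bs) \<partial>M)) / 2 ^ T"
    unfolding B_def[symmetric]
    using T B exit_prob_or_expected_smCE[OF M meas A01 \<open>0 < B\<close>, of T]
    by (intro exit_prob_or_smCE_arith) simp_all
qed simp

end
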